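(* For any orderings of $V$ used in the two passes, the output $S$ of the Two-Pass algorithm satisfies $|S|\le k$ and $f(S)\ge\frac59\mathrm{OPT}$.
   Context: $V$ is a finite ground set with $|V|=n$; $f:2^V\to\mathbb{R}_{\ge0}$ is monotone, submodular and normalized; $f(e\mid Y)=f(Y\cup\{e\})-f(Y)$. $k\le n$ is a positive integer and $\mathrm{OPT}=\max\{f(S):S\subseteq V,|S|\le k\}$. Two-Pass algorithm (knows $\mathrm{OPT}$): start with $S=\emptyset$. In the first pass over the elements of $V$ (in some order), add each element $e$ to $S$ if $|S|<k$ and $f(e\mid S)\ge\frac{2}{3}\cdot\frac{\mathrm{OPT}}{k}$. In the second pass over the elements of $V$ (in some order), add each element $e$ to $S$ if $|S|<k$ and $f(e\mid S)\ge\frac{4}{9}\cdot\frac{\mathrm{OPT}}{k}$. Return $S$. *)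

theory Defs
  imports Complex_Main
begin

definition marginal :: "('a set \<Rightarrow> real) \<Rightarrow> 'a \<Rightarrow> 'a set \<Rightarrow> real" where
  "marginal f e Y = f (Y \<union> {e}) - f Y"

definition monotone_set_fun :: "'a set \<Rightarrow> ('a set \<Rightarrow> real) \<Rightarrow> bool" where
  "monotone_set_fun V f \<longleftrightarrow> (\<forall>A B. A \<subseteq> B \<and> B \<subseteq> V \<longrightarrow> f A \<le> f B)"

definition submodular :: "'a set \<Rightarrow> ('a set \<Rightarrow> real) \<Rightarrow> bool" where
  "submodular V f \<longleftrightarrow>
     (\<forall>A B e. A \<subseteq> B \<and> B \<subseteq> V \<and> e \<in> V - B \<longrightarrow> marginal f e B \<le> marginal f e A)"

definition normalized :: "('a set \<Rightarrow> real) \<Rightarrow> bool" where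
  "normalized f \<longleftrightarrow> f {} = 0"

definition nonneg_set_fun :: "'a set \<Rightarrow> ('a set \<Rightarrow> real) \<Rightarrow> bool" where
  "nonneg_set_fun V f \<longleftrightarrow> (\<forall>S. S \<subseteq> V \<longrightarrow> f S \<ge> 0)"

definition OPT :: "'a set \<Rightarrow> ('a set \<Rightarrow> real) \<Rightarrow> nat \<Rightarrow> real" where
  "OPT V f k = Max {f S | S. S \<subseteq> V \<and> card S \<le> k}"

definition threshold_pass :: "('a set \<Rightarrow> real) \<Rightarrow> nat \<Rightarrow> real \<Rightarrow> 'a list \<Rightarrow> 'a set \<Rightarrow> 'a set" where
  "threshold_pass f k \<tau> xs S0 =
     fold (\<lambda>e S. if card S < k \<and> marginal f e S \<ge> \<tau> then insert e S else S) xs S0"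

definition two_pass :: "('a set \<Rightarrow> real) \<Rightarrow> nat \<Rightarrow> real \<Rightarrow> 'a list \<Rightarrow> 'a list \<Rightarrow> 'a set" where
  "two_pass f k opt ord1 ord2 =
     threshold_pass f k ((4/9) * (opt / real k)) ord2
       (threshold_pass f k ((2/3) * (opt / real k)) ord1 {})"

end

theory Submission
  imports Defs
begin

text \<open>
  Let \<open>c = OPT/k\<close>, let \<open>S\<^sub>1\<close> be the set after the first pass and \<open>S\<^sub>2\<close> the output.
  A pass whose result \<open>T\<close> is not full rejected every element of an optimal set \<open>O\<close> outside \<open>T\<close>
  because its marginal gain was below the threshold \<open>\<tau>\<close> at some subset of \<open>T\<close>, hence (by
  submodularity) also at \<open>T\<close>; so \<open>OPT \<le> f T + k\<tau>\<close>. Every accepted element gains at least \<open>\<tau>\<close>.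
  If \<open>S\<^sub>2\<close> is not full, \<open>f S\<^sub>2 \<ge> OPT - (4/9)OPT\<close>. Otherwise \<open>f S\<^sub>1 \<ge> (2/3)|S\<^sub>1|c\<close> and
  \<open>f S\<^sub>1 \<ge> OPT/3\<close> (whether or not \<open>S\<^sub>1\<close> is full), and the second pass adds at least
  \<open>(k - |S\<^sub>1|)(4/9)c\<close>, which combine to \<open>f S\<^sub>2 \<ge> f S\<^sub>1/3 + (4/9)OPT \<ge> (5/9)OPT\<close>.
\<close>

lemma threshold_pass_Cons:
  "threshold_pass f k \<tau> (x # xs) S =
     threshold_pass f k \<tau> xs (if card S < k \<and> marginal f x S \<ge> \<tau> then insert x S else S)"
  by (simp add: threshold_pass_def)

lemma threshold_pass_Nil: "threshold_pass f k \<tau> [] S = S"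
  by (simp add: threshold_pass_def)

lemma threshold_pass_superset: "S \<subseteq> threshold_pass f k \<tau> xs S"
proof (induction xs arbitrary: S)
  case (Cons x xs)
  have "S \<subseteq> (if card S < k \<and> marginal f x S \<ge> \<tau> then insert x S else S)"
    by auto
  with Cons.IH show ?case
    unfolding threshold_pass_Cons by (rule order_trans[rotated])
qed (simp add: threshold_pass_Nil)

lemma threshold_pass_subset_Un: "threshold_pass f k \<tau> xs S \<subseteq> S \<union> set xs"
proof (induction xs arbitrary: S)
  case (Cons x xs)
  have "(if card S < k \<and> marginal f x S \<ge> \<tau> then insert x S else S) \<union> set xs \<subseteq> S \<union> set (x # xs)"
    by auto
  with Cons.IH show ?case
    unfolding threshold_pass_Cons by (rule order_trans)
qed (simp add: threshold_pass_Nil)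

lemma card_threshold_pass_le:
  assumes "finite S" and "card S \<le> k"
  shows "card (threshold_pass f k \<tau> xs S) \<le> k"
  using assms
proof (induction xs arbitrary: S)
  case (Cons x xs)
  let ?S' = "if card S < k \<and> marginal f x S \<ge> \<tau> then insert x S else S"
  have "finite ?S'" and "card ?S' \<le> k"
    using Cons.prems by (auto simp: card_insert_if)
  then show ?case
    unfolding threshold_pass_Cons by (rule Cons.IH)
qed (simp add: threshold_pass_Nil)

lemma threshold_pass_gain:
  assumes "finite S"
  shows "f S + (real (card (threshold_pass f k \<tau> xs S)) - real (card S)) * \<tau>
           \<le> f (threshold_pass f k \<tau> xs S)"
  using assms
proof (induction xs arbitrary: S)
  case Nil
  then show ?case by (simp add: threshold_pass_Nil)
next
  case (Cons x xs)
  define S' where "S' = (if card S < k \<and> marginal f x S \<ge> \<tau> then insert x S else S)"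
  have "finite S'" using Cons.prems by (simp add: S'_def)
  have step: "f S + (real (card S') - real (card S)) * \<tau> \<le> f S'"
  proof (cases "card S < k \<and> marginal f x S \<ge> \<tau> \<and> x \<notin> S")
    case True
    then show ?thesis using Cons.prems by (simp add: S'_def marginal_def)
  next
    case False
    then have "S' = S" by (auto simp: S'_def)
    then show ?thesis by simp
  qed
  define T where "T = threshold_pass f k \<tau> xs S'"
  have T: "threshold_pass f k \<tau> (x # xs) S = T"
    by (simp add: threshold_pass_Cons S'_def T_def)
  have "f S + (real (card T) - real (card S)) * \<tau>
      = f S + (real (card S') - real (card S)) * \<tau> + (real (card T) - real (card S')) * \<tau>"
    by (simp add: algebra_simps)
  also have "\<dots> \<le> f S' + (real (card T) - real (card S')) * \<tau>"
    using step by simp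
  also have "\<dots> \<le> f T"
    using Cons.IH[OF \<open>finite S'\<close>] by (simp add: T_def)
  finally show ?case unfolding T .
qed

text \<open>By submodularity, the gain of an element rejected at an intermediate set can only drop later.\<close>
lemma threshold_pass_rejected:
  assumes "finite V" and "submodular V f" and "S \<subseteq> V" and "set xs \<subseteq> V"
    and "e \<in> set xs" and "e \<notin> threshold_pass f k \<tau> xs S"
    and "card (threshold_pass f k \<tau> xs S) < k"
  shows "marginal f e (threshold_pass f k \<tau> xs S) < \<tau>"
  using assms(3-)
proof (induction xs arbitrary: S)
  case Nil
  then show ?case by simp
next
  case (Cons x xs)
  define S' where "S' = (if card S < k \<and> marginal f x S \<ge> \<tau> then insert x S else S)"
  define T where "T = threshold_pass f k \<tau> xs S'"
  have T: "threshold_pass f k \<tau> (x # xs) S = T"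
    by (simp add: threshold_pass_Cons S'_def T_def)
  have "S' \<subseteq> V" using Cons.prems by (auto simp: S'_def)
  have "S \<subseteq> S'" by (simp add: S'_def subset_insertI)
  have "S' \<subseteq> T" unfolding T_def by (rule threshold_pass_superset)
  have "T \<subseteq> V" using threshold_pass_subset_Un[of f k \<tau> xs S'] \<open>S' \<subseteq> V\<close> Cons.prems(2)
    unfolding T_def by auto
  show ?case
  proof (cases "e = x")
    case True
    have "x \<notin> S'" using Cons.prems(4) True \<open>S' \<subseteq> T\<close> unfolding T by blast
    have "card S \<le> card T"
      using \<open>S \<subseteq> S'\<close> \<open>S' \<subseteq> T\<close> \<open>T \<subseteq> V\<close> assms(1) by (meson card_mono finite_subset order_trans)
    then have "card S < k" using Cons.prems(5) unfolding T by linarith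
    then have "marginal f x S < \<tau>" using \<open>x \<notin> S'\<close> unfolding S'_def by (auto split: if_splits)
    moreover have "marginal f x T \<le> marginal f x S"
      using assms(2) \<open>S \<subseteq> S'\<close> \<open>S' \<subseteq> T\<close> \<open>T \<subseteq> V\<close> \<open>x \<notin> S'\<close> Cons.prems(2,4) True
      unfolding submodular_def T by auto
    ultimately show ?thesis unfolding T True by linarith
  next
    case False
    then show ?thesis
      using Cons.IH[OF \<open>S' \<subseteq> V\<close>] Cons.prems by (simp add: T T_def)
  qed
qed

lemma submodular_Un_le_sum_marginal:
  assumes "submodular V f" and "finite A" and "A \<subseteq> V" and "S \<subseteq> V" and "A \<inter> S = {}"
  shows "f (S \<union> A) \<le> f S + (\<Sum>e\<in>A. marginal f e S)"
  using assms(2-)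
proof (induction A rule: finite_induct)
  case empty
  then show ?case by simp
next
  case (insert a A)
  have "S \<union> insert a A = (S \<union> A) \<union> {a}" by blast
  then have "f (S \<union> insert a A) = f (S \<union> A) + marginal f a (S \<union> A)"
    by (simp add: marginal_def)
  also have "\<dots> \<le> f (S \<union> A) + marginal f a S"
  proof -
    have "S \<subseteq> S \<union> A" and "S \<union> A \<subseteq> V" and "a \<in> V - (S \<union> A)"
      using insert.prems insert.hyps by auto
    then show ?thesis using assms(1) unfolding submodular_def by auto
  qed
  also have "\<dots> \<le> f S + (\<Sum>e\<in>A. marginal f e S) + marginal f a S"
    using insert.IH insert.prems by simp
  also have "\<dots> = f S + (\<Sum>e\<in>insert a A. marginal f e S)"
    using insert.hyps by simp
  finally show ?case .
qed

lemma le_plus_card_mult_threshold: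
  assumes "finite V" and "submodular V f" and "monotone_set_fun V f"
    and "S \<subseteq> V" and "Opt \<subseteq> V" and "\<tau> \<ge> 0"
    and small: "\<And>e. e \<in> Opt - S \<Longrightarrow> marginal f e S < \<tau>"
  shows "f Opt \<le> f S + real (card Opt) * \<tau>"
proof -
  have "finite Opt" using assms(5,1) by (rule finite_subset)
  have "Opt \<subseteq> S \<union> (Opt - S)" and "S \<union> (Opt - S) \<subseteq> V"
    using assms(4,5) by auto
  then have "f Opt \<le> f (S \<union> (Opt - S))"
    using assms(3) unfolding monotone_set_fun_def by blast
  also have "\<dots> \<le> f S + (\<Sum>e\<in>Opt - S. marginal f e S)"
    using assms(2,4,5) \<open>finite Opt\<close> by (intro submodular_Un_le_sum_marginal) auto
  also have "(\<Sum>e\<in>Opt - S. marginal f e S) \<le> (\<Sum>e\<in>Opt - S. \<tau>)"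
    using small by (intro sum_mono) (simp add: less_imp_le)
  also have "\<dots> \<le> real (card Opt) * \<tau>"
    using \<open>finite Opt\<close> \<open>\<tau> \<ge> 0\<close> by (simp add: card_mono mult_right_mono)
  finally show ?thesis by simp
qed

lemma OPT_attained:
  assumes "finite V"
  obtains Opt where "Opt \<subseteq> V" and "card Opt \<le> k" and "f Opt = OPT V f k"
proof -
  have "{f S | S. S \<subseteq> V \<and> card S \<le> k} = f ` {S. S \<subseteq> V \<and> card S \<le> k}" by auto
  then have "finite {f S | S. S \<subseteq> V \<and> card S \<le> k}"
    using assms by (auto intro: finite_subset[of _ "Pow V"])
  moreover have "{f S | S. S \<subseteq> V \<and> card S \<le> k} \<noteq> {}" by auto
  ultimately have "OPT V f k \<in> {f S | S. S \<subseteq> V \<and> card S \<le> k}"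
    unfolding OPT_def by (rule Max_in)
  then show ?thesis using that by auto
qed

lemma OPT_nonneg:
  assumes "finite V" and "nonneg_set_fun V f"
  shows "OPT V f k \<ge> 0"
proof -
  obtain Opt where "Opt \<subseteq> V" and "f Opt = OPT V f k"
    using OPT_attained[OF assms(1)] .
  then show ?thesis using assms(2) unfolding nonneg_set_fun_def by auto
qed

lemma OPT_le_unfilled_threshold_pass:
  assumes "finite V" and "submodular V f" and "monotone_set_fun V f"
    and "S \<subseteq> V" and "set xs = V" and "\<tau> \<ge> 0"
    and "card (threshold_pass f k \<tau> xs S) < k"
  shows "OPT V f k \<le> f (threshold_pass f k \<tau> xs S) + real k * \<tau>"
proof -
  let ?T = "threshold_pass f k \<tau> xs S"
  obtain Opt where "Opt \<subseteq> V" and "card Opt \<le> k" and "f Opt = OPT V f k"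
    using OPT_attained[OF assms(1)] .
  have "?T \<subseteq> V" using threshold_pass_subset_Un[of f k \<tau> xs S] assms(4,5) by auto
  have "f Opt \<le> f ?T + real (card Opt) * \<tau>"
  proof (rule le_plus_card_mult_threshold[OF assms(1-3) \<open>?T \<subseteq> V\<close> \<open>Opt \<subseteq> V\<close> assms(6)])
    fix e assume "e \<in> Opt - ?T"
    then show "marginal f e ?T < \<tau>"
      using threshold_pass_rejected[OF assms(1,2,4)] assms(5,7) \<open>Opt \<subseteq> V\<close> by blast
  qed
  also have "\<dots> \<le> f ?T + real k * \<tau>"
    using assms(6) \<open>card Opt \<le> k\<close> by (simp add: mult_right_mono)
  finally show ?thesis using \<open>f Opt = OPT V f k\<close> by simp
qed

lemma two_pass_value_bound:
  fixes opt c k s\<^sub>1 s\<^sub>2 v\<^sub>1 v\<^sub>2 :: real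
  assumes opt: "opt = k * c" and "c \<ge> 0" and "0 \<le> s\<^sub>1" and "s\<^sub>1 \<le> k" and "s\<^sub>2 \<le> k"
    and gain\<^sub>1: "v\<^sub>1 \<ge> s\<^sub>1 * ((2/3) * c)"
    and gain\<^sub>2: "v\<^sub>2 \<ge> v\<^sub>1 + (s\<^sub>2 - s\<^sub>1) * ((4/9) * c)"
    and unfilled\<^sub>1: "s\<^sub>1 < k \<Longrightarrow> opt \<le> v\<^sub>1 + k * ((2/3) * c)"
    and unfilled\<^sub>2: "s\<^sub>2 < k \<Longrightarrow> opt \<le> v\<^sub>2 + k * ((4/9) * c)"
  shows "v\<^sub>2 \<ge> (5/9) * opt"
proof -
  have lin: "s\<^sub>1 * ((2/3) * c) = (2/3) * (s\<^sub>1 * c)" "k * ((2/3) * c) = (2/3) * opt"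
    "k * ((4/9) * c) = (4/9) * opt" "(s\<^sub>2 - s\<^sub>1) * ((4/9) * c) = (4/9) * (s\<^sub>2 * c) - (4/9) * (s\<^sub>1 * c)"
    by (simp_all add: opt left_diff_distrib mult.left_commute)
  have "v\<^sub>1 \<ge> opt / 3"
  proof (cases "s\<^sub>1 < k")
    case True
    then show ?thesis using unfilled\<^sub>1 lin by linarith
  next
    case False
    then have "s\<^sub>1 * c = opt" using \<open>s\<^sub>1 \<le> k\<close> opt by simp
    moreover have "opt \<ge> 0" using opt \<open>0 \<le> s\<^sub>1\<close> \<open>s\<^sub>1 \<le> k\<close> \<open>c \<ge> 0\<close> by simp
    ultimately show ?thesis using gain\<^sub>1 lin by linarith
  qed
  show ?thesis
  proof (cases "s\<^sub>2 < k")
    case True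
    then show ?thesis using unfilled\<^sub>2 lin by linarith
  next
    case False
    then have "s\<^sub>2 * c = opt" using \<open>s\<^sub>2 \<le> k\<close> opt by simp
    then show ?thesis using \<open>v\<^sub>1 \<ge> opt / 3\<close> gain\<^sub>1 gain\<^sub>2 lin by linarith
  qed
qed

theorem mainTheorem16:
  fixes V :: "'a set" and f :: "'a set \<Rightarrow> real" and k :: nat
    and ord1 ord2 :: "'a list"
  assumes "finite V"
    and "nonneg_set_fun V f" and "monotone_set_fun V f" and "submodular V f" and "normalized f"
    and "0 < k" and "k \<le> card V"
    and "distinct ord1" and "set ord1 = V"
    and "distinct ord2" and "set ord2 = V"
  shows "card (two_pass f k (OPT V f k) ord1 ord2) \<le> k
       \<and> f (two_pass f k (OPT V f k) ord1 ord2) \<ge> (5/9) * OPT V f k"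
proof -
  define c where "c = OPT V f k / real k"
  have opt: "OPT V f k = real k * c" and "c \<ge> 0"
    using OPT_nonneg[OF assms(1,2)] assms(6) unfolding c_def by auto
  define S\<^sub>1 where "S\<^sub>1 = threshold_pass f k ((2/3) * c) ord1 {}"
  define S\<^sub>2 where "S\<^sub>2 = threshold_pass f k ((4/9) * c) ord2 S\<^sub>1"
  have "S\<^sub>1 \<subseteq> V"
    using threshold_pass_subset_Un[of f k "(2/3) * c" ord1 "{}"] assms(9) unfolding S\<^sub>1_def by simp
  then have "finite S\<^sub>1" using assms(1) by (rule finite_subset)
  have "card S\<^sub>1 \<le> k"
    unfolding S\<^sub>1_def by (rule card_threshold_pass_le) simp_all
  have card: "card S\<^sub>2 \<le> k"
    unfolding S\<^sub>2_def by (rule card_threshold_pass_le[OF \<open>finite S\<^sub>1\<close> \<open>card S\<^sub>1 \<le> k\<close>])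
  have gain\<^sub>1: "f S\<^sub>1 \<ge> real (card S\<^sub>1) * ((2/3) * c)"
    using threshold_pass_gain[of "{}" f k "(2/3) * c" ord1] assms(5)
    unfolding S\<^sub>1_def normalized_def by simp
  have gain\<^sub>2: "f S\<^sub>2 \<ge> f S\<^sub>1 + (real (card S\<^sub>2) - real (card S\<^sub>1)) * ((4/9) * c)"
    unfolding S\<^sub>2_def by (rule threshold_pass_gain[OF \<open>finite S\<^sub>1\<close>])
  note unfilled = OPT_le_unfilled_threshold_pass[OF assms(1,4,3)]
  have "f S\<^sub>2 \<ge> (5/9) * OPT V f k"
  proof (rule two_pass_value_bound[OF opt \<open>c \<ge> 0\<close> _ _ _ gain\<^sub>1 gain\<^sub>2])
    show "OPT V f k \<le> f S\<^sub>1 + real k * ((2/3) * c)" if "real (card S\<^sub>1) < real k"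
      using unfilled[of "{}" ord1 "(2/3) * c"] that assms(9) \<open>c \<ge> 0\<close> unfolding S\<^sub>1_def by simp
    show "OPT V f k \<le> f S\<^sub>2 + real k * ((4/9) * c)" if "real (card S\<^sub>2) < real k"
      using unfilled[of S\<^sub>1 ord2 "(4/9) * c"] that assms(11) \<open>S\<^sub>1 \<subseteq> V\<close> \<open>c \<ge> 0\<close>
      unfolding S\<^sub>2_def by simp
  qed (use card \<open>card S\<^sub>1 \<le> k\<close> in simp_all)
  moreover have "two_pass f k (OPT V f k) ord1 ord2 = S\<^sub>2"
    unfolding two_pass_def S\<^sub>2_def S\<^sub>1_def c_def ..
  ultimately show ?thesis using card by simp
qed

end
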